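(* Let $D$ be a database and let $Q$ queries be received. Let $\Omega_1,\ldots,\Omega_K$ be partitions of $D$ into pairwise disjoint sub-databases (of sizes $|\Omega_k|$). Suppose a proportion $p\in[0,1)$ of the $Q$ queries (namely $pQ$ of them) do not lie in any of the sigma-algebras generated by $\Omega_1,\ldots,\Omega_K$, while each of the remaining $(1-p)Q$ queries is a subset of some $\Omega_k$. Fix $\varepsilon>0$. The benchmark algorithm answers every query $A$ independently by $N(A)+\zeta_A$, $\zeta_A\sim\mathrm{Lap}(1/\varepsilon)$, with total privacy budget $Q\varepsilon$. The online sigma-counting algorithm answers each of the $pQ$ queries not in any sigma-algebra by $N(A)+\zeta_A$, $\zeta_A\sim\mathrm{Lap}(1/\varepsilon)$, and answers each query $A\subseteq\Omega_k$ by $\hat N(A)=\sum_{\omega\in A}\hat N(\omega)$, where independently for each $k$ and $\omega\in\Omega_k$, $\hat N(\omega)=\max(N(\omega)+\zeta_\omega,0)$, $\zeta_\omega\sim\mathrm{Lap}(1/\varepsilon')$, with $\varepsilon'=(1-p)Q\varepsilon/\sum_{k=1}^K|\Omega_k|$, so that its total privacy budget $\sum_k|\Omega_k|\varepsilon'+pQ\varepsilon$ equals $Q\varepsilon$. If $$Q>\frac{\bigl(\sum_{k=1}^K|\Omega_k|\bigr)\sqrt{\max_{1\le k\le K}|\Omega_k|}}{1-p},$$ then the online sigma-counting algorithm has strictly larger utility on the $Q$ queries than the benchmark algorithm.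
   Context: $N(A)$ denotes the true number of rows in the sub-database corresponding to $A$. $\mathrm{Lap}(\lambda)$ is the Laplace distribution with density $(2\lambda)^{-1}e^{-|x|/\lambda}$. The privacy budget is the total differential-privacy parameter by sequential composition (each $\mathrm{Lap}(1/\varepsilon)$ count mechanism contributes $\varepsilon$). The utility of an algorithm on a finite query set $\mathcal F$ is $\mathcal U=\frac{1}{\mathrm{card}(\mathcal F)}\sum_{A\in\mathcal F}\frac{2}{\mathrm{Var}(\hat N(A)\mid N(A))}$. *)

theory Defs
  imports "HOL-Probability.Probability"
begin

definition nrows :: "'d multiset \<Rightarrow> 'd set \<Rightarrow> nat" where
  "nrows D A = size (filter_mset (\<lambda>x. x \<in> A) D)"

definition laplace_density :: "real \<Rightarrow> real \<Rightarrow> real" where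
  "laplace_density l x = exp (- \<bar>x\<bar> / l) / (2 * l)"

definition lap :: "real \<Rightarrow> real measure" where
  "lap l = density lborel (\<lambda>x. ennreal (laplace_density l x))"

definition Var :: "'a measure \<Rightarrow> ('a \<Rightarrow> real) \<Rightarrow> real" where
  "Var M X = (\<integral>x. (X x - (\<integral>y. X y \<partial>M))\<^sup>2 \<partial>M)"

definition bench_var :: "'d multiset \<Rightarrow> real \<Rightarrow> 'd set \<Rightarrow> real" where
  "bench_var D eps A = Var (lap (1 / eps)) (\<lambda>z. real (nrows D A) + z)"

text \<open>Blocks of the partition Om contained in the query A (A is a union of these).\<close>
definition blocks_of :: "'d set set \<Rightarrow> 'd set \<Rightarrow> 'd set set" where
  "blocks_of Om A = {w \<in> Om. w \<subseteq> A}"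

definition sigma_var :: "'d multiset \<Rightarrow> real \<Rightarrow> 'd set set \<Rightarrow> 'd set \<Rightarrow> real" where
  "sigma_var D eps' Om A =
     Var (PiM (blocks_of Om A) (\<lambda>_. lap (1 / eps')))
         (\<lambda>z. \<Sum>w\<in>blocks_of Om A. max (real (nrows D w) + z w) 0)"

end

(* The benchmark answers every query with variance Var Lap(1/eps) = 2/eps^2. A query A in the
   sigma-algebra of the partition Om_k is a union of m <= |Om_k| blocks, and the sigma-counting
   answer is a sum of m independent clipped counts max (N + z, 0) with z ~ Lap(1/eps'). Clipping
   at 0 does not increase the variance when N >= 0, so that answer has variance at most
   2 m / eps'^2, and the lower bound on Q says precisely that |Om_k| eps^2 < eps'^2. Hence every
   query in some sigma-algebra is answered with strictly smaller (and positive) variance, while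
   the remaining queries are answered as in the benchmark. *)

theory Submission
  imports Defs
begin

lemma laplace_density_pos: "l > 0 \<Longrightarrow> 0 < laplace_density l x"
  by (simp add: laplace_density_def)

lemma laplace_density_nonneg: "l > 0 \<Longrightarrow> 0 \<le> laplace_density l x"
  using laplace_density_pos less_imp_le by blast

lemma borel_measurable_laplace_density[measurable]: "laplace_density l \<in> borel_measurable borel"
  unfolding laplace_density_def[abs_def] by measurable

lemma nn_integral_laplace_abs_moment:
  assumes l: "l > 0"
  shows "(\<integral>\<^sup>+x. ennreal (laplace_density l x * \<bar>x\<bar>^i) \<partial>lborel) = ennreal (fact i * l^i)"
proof -
  define f where "f x = erlang_density 0 (1/l) x * x^i" for x
  have f_nonneg: "0 \<le> f x" for x
    using l by (simp add: f_def erlang_density_def)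
  have [measurable]: "f \<in> borel_measurable borel"
    unfolding f_def[abs_def] by measurable
  have f_reflect: "(\<integral>\<^sup>+x. f (- x) \<partial>lborel) = (\<integral>\<^sup>+x. f x \<partial>lborel)"
    using nn_integral_real_affine[of "\<lambda>x. ennreal (f x)" "-1" 0] by simp
  have f_moment: "(\<integral>\<^sup>+x. f x \<partial>lborel) = ennreal (fact i * l^i)"
    using nn_integral_erlang_ith_moment[of "1/l" 0 i] l by (simp add: f_def power_one_over)
  \<comment> \<open>On either half-line the Laplace density is half the exponential density of rate 1/l.\<close>
  have density_split: "laplace_density l x * \<bar>x\<bar>^i = 1/2 * (f x + f (- x))" if "x \<noteq> 0" for x
    using that by (cases "x > 0") (simp_all add: f_def erlang_density_def laplace_density_def power_minus')
  have "AE x in lborel. ennreal (laplace_density l x * \<bar>x\<bar>^i)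
      = ennreal (1/2) * (ennreal (f x) + ennreal (f (- x)))"
    using AE_lborel_singleton[of 0]
    by eventually_elim (metis density_split ennreal_mult'' ennreal_plus add_nonneg_nonneg f_nonneg)
  then have "(\<integral>\<^sup>+x. ennreal (laplace_density l x * \<bar>x\<bar>^i) \<partial>lborel)
      = ennreal (1/2) * ((\<integral>\<^sup>+x. f x \<partial>lborel) + (\<integral>\<^sup>+x. f (- x) \<partial>lborel))"
    by (simp add: nn_integral_cong_AE nn_integral_cmult nn_integral_add)
  also have "\<dots> = ennreal (1/2 * (fact i * l^i + fact i * l^i))"
    unfolding f_reflect f_moment using l
    by (metis ennreal_mult'' ennreal_plus add_nonneg_nonneg fact_ge_zero zero_le_power less_imp_le mult_nonneg_nonneg)
  finally show ?thesis by simp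
qed

lemma sets_lap[measurable_cong]: "sets (lap l) = sets borel"
  by (simp add: lap_def)

lemma space_lap[simp]: "space (lap l) = UNIV"
  by (simp add: lap_def)

lemma prob_space_lap: "l > 0 \<Longrightarrow> prob_space (lap l)"
  using nn_integral_laplace_abs_moment[of l 0]
  by (intro prob_spaceI) (simp add: lap_def emeasure_density)

lemma integrable_lap_power:
  assumes l: "l > 0"
  shows "integrable (lap l) (\<lambda>x. x^i)"
proof -
  have "(\<integral>\<^sup>+x. ennreal (norm (laplace_density l x * x^i)) \<partial>lborel) = ennreal (fact i * l^i)"
    using l by (simp add: abs_mult power_abs laplace_density_nonneg nn_integral_laplace_abs_moment)
  then have "integrable lborel (\<lambda>x. laplace_density l x * x^i)"
    by (intro integrableI_bounded) auto
  then show ?thesis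
    unfolding lap_def using l by (subst integrable_density) (auto simp: laplace_density_nonneg)
qed

lemma integral_lap:
  assumes "l > 0" and [measurable]: "f \<in> borel_measurable borel"
  shows "integral\<^sup>L (lap l) f = (\<integral>x. laplace_density l x * f x \<partial>lborel)"
  unfolding lap_def using assms(1)
  by (subst integral_density) (auto simp: laplace_density_nonneg)

lemma lap_mean:
  assumes "l > 0"
  shows "integral\<^sup>L (lap l) (\<lambda>x. x) = 0"
proof -
  let ?f = "\<lambda>x. laplace_density l x * x"
  have "(\<integral>x. ?f x \<partial>lborel) = \<bar>-1\<bar> *\<^sub>R (\<integral>x. ?f (0 + (-1) * x) \<partial>lborel)"
    by (rule lborel_integral_real_affine) simp
  also have "\<dots> = - (\<integral>x. ?f x \<partial>lborel)"
    by (simp add: laplace_density_def)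
  finally show ?thesis
    using assms by (simp add: integral_lap)
qed

lemma lap_second_moment:
  assumes l: "l > 0"
  shows "integral\<^sup>L (lap l) (\<lambda>x. x^2) = 2 * l^2"
proof -
  have "integral\<^sup>L (lap l) (\<lambda>x. x^2) = (\<integral>x. laplace_density l x * \<bar>x\<bar>^2 \<partial>lborel)"
    using l by (simp add: integral_lap)
  also have "\<dots> = enn2real (\<integral>\<^sup>+x. ennreal (laplace_density l x * \<bar>x\<bar>^2) \<partial>lborel)"
    using l by (intro integral_eq_nn_integral) (auto simp: laplace_density_nonneg)
  also have "\<dots> = 2 * l^2"
    using l nn_integral_laplace_abs_moment[OF l, of 2] by simp
  finally show ?thesis .
qed

lemma Var_lap_shift:
  assumes l: "l > 0"
  shows "Var (lap l) (\<lambda>z. c + z) = 2 * l^2"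
proof -
  interpret prob_space "lap l"
    using l by (rule prob_space_lap)
  have "integral\<^sup>L (lap l) (\<lambda>z. c + z) = c"
    using l integrable_lap_power[of l 1] by (simp add: lap_mean prob_space[simplified])
  then show ?thesis
    using l by (simp add: Var_def lap_second_moment)
qed

lemma (in prob_space) Var_le_integral_sq_dev:
  assumes X: "integrable M X" "integrable M (\<lambda>x. (X x)^2)"
  shows "Var M X \<le> expectation (\<lambda>x. (X x - c)^2)"
proof -
  have "Var M X = expectation (\<lambda>x. (X x)^2) - (expectation X)^2"
    unfolding Var_def using X by (rule variance_eq)
  moreover have "expectation (\<lambda>x. (X x - c)^2) = expectation (\<lambda>x. (X x)^2) - 2 * c * expectation X + c^2"
    using X by (simp add: power2_diff prob_space)
  ultimately have "expectation (\<lambda>x. (X x - c)^2) = Var M X + (expectation X - c)^2"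
    by (simp add: power2_diff)
  then show ?thesis
    by simp
qed

lemma (in prob_space) AE_eq_expectation_of_Var_eq_0:
  assumes X: "integrable M X" "integrable M (\<lambda>x. (X x)^2)" and "Var M X = 0"
  shows "AE x in M. X x = expectation X"
proof -
  have "integrable M (\<lambda>x. (X x - expectation X)^2)"
    using X by (simp add: power2_diff)
  with assms(3) have "AE x in M. (X x - expectation X)^2 = 0"
    unfolding Var_def by (subst integral_nonneg_eq_0_iff_AE[symmetric]) auto
  then show ?thesis
    by eventually_elim simp
qed

lemma integrable_lap_clipped:
  assumes l: "l > 0"
  shows "integrable (lap l) (\<lambda>z. max (c + z) 0)"
    and "integrable (lap l) (\<lambda>z. (max (c + z) 0)^2)"
proof -
  interpret prob_space "lap l"
    using l by (rule prob_space_lap)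
  have z: "integrable (lap l) (\<lambda>z. \<bar>c\<bar> + \<bar>z\<bar>)" and z2: "integrable (lap l) (\<lambda>z. 2 * c^2 + 2 * z^2)"
    using integrable_lap_power[OF l, of 1] integrable_lap_power[OF l, of 2] by auto
  show "integrable (lap l) (\<lambda>z. max (c + z) 0)"
    by (rule Bochner_Integration.integrable_bound[OF z]) auto
  have "(max (c + z) 0)^2 \<le> 2 * c^2 + 2 * z^2" for z
  proof -
    have "(max (c + z) 0)^2 \<le> (c + z)^2"
      by (simp add: max_def)
    also have "\<dots> \<le> 2 * c^2 + 2 * z^2"
      using zero_le_power2[of "c - z"] unfolding power2_sum power2_diff by linarith
    finally show ?thesis .
  qed
  then show "integrable (lap l) (\<lambda>z. (max (c + z) 0)^2)"
    by (intro Bochner_Integration.integrable_bound[OF z2]) auto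
qed

text \<open>The variance is at most the mean square deviation from c, and for c \<ge> 0 clipping at 0
  moves c + z no farther from c than z itself.\<close>

lemma Var_lap_clipped_le:
  assumes l: "l > 0" and c: "c \<ge> 0"
  shows "Var (lap l) (\<lambda>z. max (c + z) 0) \<le> 2 * l^2"
proof -
  interpret prob_space "lap l"
    using l by (rule prob_space_lap)
  have "Var (lap l) (\<lambda>z. max (c + z) 0) \<le> expectation (\<lambda>z. (max (c + z) 0 - c)^2)"
    using integrable_lap_clipped[OF l] by (rule Var_le_integral_sq_dev)
  also have "\<dots> \<le> expectation (\<lambda>z. z^2)"
  proof (rule integral_mono)
    show "integrable (lap l) (\<lambda>z. (max (c + z) 0 - c)^2)"
      using integrable_lap_clipped[OF l] by (simp add: power2_diff)
    show "integrable (lap l) (\<lambda>z. z^2)"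
      using l by (rule integrable_lap_power)
    show "(max (c + z) 0 - c)^2 \<le> z^2" for z
      using c by (subst abs_le_square_iff[symmetric]) auto
  qed
  also have "\<dots> = 2 * l^2"
    using l by (rule lap_second_moment)
  finally show ?thesis .
qed

text \<open>Positivity matters because utilities are 2 / Var, and 2 / 0 = 0.\<close>

lemma Var_lap_clipped_pos:
  assumes l: "l > 0"
  shows "Var (lap l) (\<lambda>z. max (c + z) 0) > 0"
proof (rule ccontr)
  interpret prob_space "lap l"
    using l by (rule prob_space_lap)
  define m where "m = expectation (\<lambda>z. max (c + z) 0)"
  define I where "I = {\<bar>m\<bar> + \<bar>c\<bar> + 1 .. \<bar>m\<bar> + \<bar>c\<bar> + 2}"
  assume "\<not> Var (lap l) (\<lambda>z. max (c + z) 0) > 0"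
  then have "Var (lap l) (\<lambda>z. max (c + z) 0) = 0"
    using variance_positive[of "\<lambda>z. max (c + z) 0"] unfolding Var_def by linarith
  then have "AE z in lap l. max (c + z) 0 = m"
    unfolding m_def using integrable_lap_clipped[OF l] by (intro AE_eq_expectation_of_Var_eq_0)
  then have "AE z in lborel. max (c + z) 0 = m"
    unfolding lap_def using l by (subst (asm) AE_density) (auto simp: laplace_density_pos)
  then have "AE z in lborel. z \<notin> I"
    by eventually_elim (auto simp: I_def)
  then have "emeasure lborel I = 0"
    by (subst (asm) AE_iff_measurable[where N=I]) (auto simp: I_def)
  then show False
    by (simp add: I_def)
qed

lemma (in product_prob_space) integral_PiM_prod_subset:
  fixes f :: "'i \<Rightarrow> 'a \<Rightarrow> real"
  assumes J: "finite J" "K \<subseteq> J" and f: "\<And>i. i \<in> K \<Longrightarrow> integrable (M i) (f i)"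
  shows "integrable (PiM J M) (\<lambda>x. \<Prod>i\<in>K. f i (x i))"
    and "integral\<^sup>L (PiM J M) (\<lambda>x. \<Prod>i\<in>K. f i (x i)) = (\<Prod>i\<in>K. integral\<^sup>L (M i) (f i))"
proof -
  define F where "F i = (if i \<in> K then f i else (\<lambda>_. 1))" for i
  have F: "i \<in> J \<Longrightarrow> integrable (M i) (F i)" for i
    using f by (simp add: F_def)
  have restrict: "(\<Prod>i\<in>J. if i \<in> K then g i else 1) = (\<Prod>i\<in>K. g i)" for g :: "'i \<Rightarrow> real"
    using J prod.inter_restrict[of J g K] by (simp add: Int_absorb1)
  have "(\<Prod>i\<in>J. F i (x i)) = (\<Prod>i\<in>K. f i (x i))" for x
    by (simp add: F_def if_distrib[of "\<lambda>g. g (x _)"] restrict cong: if_cong)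
  moreover have "(\<Prod>i\<in>J. integral\<^sup>L (M i) (F i)) = (\<Prod>i\<in>K. integral\<^sup>L (M i) (f i))"
    by (simp add: F_def if_distrib[of "integral\<^sup>L (M _)"] M.prob_space restrict cong: if_cong)
  ultimately show "integrable (PiM J M) (\<lambda>x. \<Prod>i\<in>K. f i (x i))"
    and "integral\<^sup>L (PiM J M) (\<lambda>x. \<Prod>i\<in>K. f i (x i)) = (\<Prod>i\<in>K. integral\<^sup>L (M i) (f i))"
    using product_integrable_prod[OF J(1) F] product_integral_prod[OF J(1) F] by simp_all
qed

lemma (in product_prob_space) integral_PiM_component:
  fixes g :: "'a \<Rightarrow> real"
  assumes "finite J" "i \<in> J" "integrable (M i) g"
  shows "integrable (PiM J M) (\<lambda>x. g (x i))"
    and "integral\<^sup>L (PiM J M) (\<lambda>x. g (x i)) = integral\<^sup>L (M i) g"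
  using integral_PiM_prod_subset[of J "{i}" "\<lambda>_. g"] assms by simp_all

lemma (in product_prob_space) Var_PiM_sum:
  fixes f :: "'i \<Rightarrow> 'a \<Rightarrow> real"
  assumes J: "finite J" and f: "\<And>i. i \<in> J \<Longrightarrow> integrable (M i) (f i)"
    and f2: "\<And>i. i \<in> J \<Longrightarrow> integrable (M i) (\<lambda>x. (f i x)^2)"
  shows "Var (PiM J M) (\<lambda>x. \<Sum>i\<in>J. f i (x i)) = (\<Sum>i\<in>J. Var (M i) (f i))"
proof -
  define h where "h i = (\<lambda>y. f i y - integral\<^sup>L (M i) (f i))" for i
  have h: "i \<in> J \<Longrightarrow> integrable (M i) (h i)" for i
    using f by (simp add: h_def)
  have h_mean: "i \<in> J \<Longrightarrow> integral\<^sup>L (M i) (h i) = 0" for i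
    using f by (simp add: h_def M.prob_space)
  have h_sq: "i \<in> J \<Longrightarrow> integrable (M i) (\<lambda>y. h i y * h i y)" for i
    using f f2 by (simp add: h_def algebra_simps power2_eq_square)
  have mean: "integral\<^sup>L (PiM J M) (\<lambda>x. \<Sum>i\<in>J. f i (x i)) = (\<Sum>i\<in>J. integral\<^sup>L (M i) (f i))"
    using integral_PiM_component[OF J _ f] by (subst Bochner_Integration.integral_sum) auto
  have cross: "integrable (PiM J M) (\<lambda>x. h i (x i) * h j (x j))
      \<and> integral\<^sup>L (PiM J M) (\<lambda>x. h i (x i) * h j (x j)) = (if i = j then Var (M i) (f i) else 0)"
    if "i \<in> J" "j \<in> J" for i j
  proof (cases "i = j")
    case True
    then show ?thesis
      using integral_PiM_component[OF J that(1) h_sq[OF that(1)]]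
      by (simp add: Var_def h_def power2_eq_square)
  next
    case False
    then show ?thesis
      using integral_PiM_prod_subset[of J "{i, j}" h] J that h h_mean by auto
  qed
  have "Var (PiM J M) (\<lambda>x. \<Sum>i\<in>J. f i (x i))
      = integral\<^sup>L (PiM J M) (\<lambda>x. \<Sum>i\<in>J. \<Sum>j\<in>J. h i (x i) * h j (x j))"
    unfolding Var_def mean
    by (simp add: power2_eq_square sum_subtractf[symmetric] h_def sum_product)
  also have "\<dots> = (\<Sum>i\<in>J. \<Sum>j\<in>J. if i = j then Var (M i) (f i) else 0)"
    using cross by (simp add: Bochner_Integration.integral_sum)
  also have "\<dots> = (\<Sum>i\<in>J. Var (M i) (f i))"
    using J by simp
  finally show ?thesis .
qed

lemma bench_var_eq: "eps > 0 \<Longrightarrow> bench_var D eps A = 2 / eps^2"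
  unfolding bench_var_def using Var_lap_shift[of "1/eps"] by (simp add: power_one_over)

lemma sigma_var_eq_sum:
  assumes e: "e > 0" and fin: "finite (blocks_of Om A)"
  shows "sigma_var D e Om A = (\<Sum>w\<in>blocks_of Om A. Var (lap (1/e)) (\<lambda>z. max (real (nrows D w) + z) 0))"
proof -
  have l: "1/e > 0"
    using e by simp
  interpret product_prob_space "\<lambda>_. lap (1/e)" "blocks_of Om A"
    by (intro product_prob_spaceI prob_space_lap[OF l])
  show ?thesis
    unfolding sigma_var_def using fin integrable_lap_clipped[OF l] by (intro Var_PiM_sum) auto
qed

lemma sigma_var_le:
  assumes e: "e > 0" and fin: "finite (blocks_of Om A)"
  shows "sigma_var D e Om A \<le> real (card (blocks_of Om A)) * (2 / e^2)"
proof -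
  have "sigma_var D e Om A \<le> (\<Sum>w\<in>blocks_of Om A. 2 * (1/e)^2)"
    unfolding sigma_var_eq_sum[OF assms] using e by (intro sum_mono Var_lap_clipped_le) auto
  then show ?thesis
    by (simp add: power_one_over)
qed

lemma sigma_var_pos:
  assumes e: "e > 0" and fin: "finite (blocks_of Om A)" and ne: "blocks_of Om A \<noteq> {}"
  shows "0 < sigma_var D e Om A"
  unfolding sigma_var_eq_sum[OF e fin] using e fin ne by (intro sum_pos Var_lap_clipped_pos) auto

lemma block_subset_of_sigma_sets_partition:
  assumes P: "partition_on X Om" and A: "A \<in> sigma_sets X Om"
    and w: "w \<in> Om" "w \<inter> A \<noteq> {}"
  shows "w \<subseteq> A"
proof -
  have "\<forall>w\<in>Om. w \<inter> A \<noteq> {} \<longrightarrow> w \<subseteq> A"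
    using A
  proof induct
    case (Basic a)
    then show ?case
      using P by (auto simp: partition_on_def disjoint_def)
  next
    case (Compl a)
    have "w \<subseteq> X" if "w \<in> Om" for w
      using P that by (auto simp: partition_on_def)
    with Compl.hyps(2) show ?case
      by blast
  next
    case (Union a)
    then show ?case
      by blast
  qed auto
  with w show ?thesis
    by blast
qed

lemma blocks_of_nonempty:
  assumes P: "partition_on X Om" and A: "A \<in> sigma_sets X Om" "A \<noteq> {}"
  shows "blocks_of Om A \<noteq> {}"
proof -
  obtain x where "x \<in> A"
    using A(2) by blast
  moreover have "A \<subseteq> \<Union>Om"
    using sigma_sets_into_sp[of Om X] A(1) P by (auto simp: partition_on_def)
  ultimately obtain w where w: "w \<in> Om" "w \<inter> A \<noteq> {}"
    by blast
  then have "w \<subseteq> A"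
    by (rule block_subset_of_sigma_sets_partition[OF P A(1)])
  with w show ?thesis
    by (auto simp: blocks_of_def)
qed

lemma bench_utility_lt_sigma_utility:
  assumes eps: "eps > 0" "eps' > 0" and fin: "finite Om" and P: "partition_on X Om"
    and A: "A \<in> sigma_sets X Om" "A \<noteq> {}"
    and budget: "real (card Om) * eps^2 < eps'^2"
  shows "2 / bench_var D eps A < 2 / sigma_var D eps' Om A"
proof -
  have blocks_fin: "finite (blocks_of Om A)"
    using fin by (rule rev_finite_subset) (auto simp: blocks_of_def)
  have "card (blocks_of Om A) \<le> card Om"
    using fin by (intro card_mono) (auto simp: blocks_of_def)
  have "sigma_var D eps' Om A \<le> real (card (blocks_of Om A)) * (2 / eps'^2)"
    using eps(2) blocks_fin by (rule sigma_var_le)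
  also have "\<dots> \<le> real (card Om) * (2 / eps'^2)"
    using \<open>card (blocks_of Om A) \<le> card Om\<close> by (intro mult_right_mono) auto
  also have "\<dots> < 2 / eps^2"
    using budget eps by (simp add: field_simps)
  also have "\<dots> = bench_var D eps A"
    using eps by (simp add: bench_var_eq)
  finally have "sigma_var D eps' Om A < bench_var D eps A" .
  moreover have "0 < sigma_var D eps' Om A"
    using sigma_var_pos[OF eps(2) blocks_fin blocks_of_nonempty[OF P A]] .
  ultimately show ?thesis
    by (simp add: frac_less2)
qed

lemma sq_lt_of_sqrt_bound:
  fixes m M S r Q eps :: real
  assumes "0 < S" "0 < r" "0 < eps" "0 \<le> m" "m \<le> M" "S * sqrt M / r < Q"
  shows "m * eps^2 < (r * Q * eps / S)^2"
proof -
  have "S * sqrt m \<le> S * sqrt M"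
    using assms by (intro mult_left_mono) auto
  also have "\<dots> < r * Q"
    using assms by (simp add: field_simps)
  finally have "sqrt m < r * Q / S"
    using assms by (simp add: field_simps)
  then have "(sqrt m)^2 < (r * Q / S)^2"
    using assms by (intro power_strict_mono) auto
  then show ?thesis
    using assms by (simp add: field_simps)
qed

theorem theorem4:
  fixes D :: "'d multiset" and X :: "'d set"
    and Om :: "nat \<Rightarrow> 'd set set" and K :: nat
    and qs :: "'d set list" and kq :: "nat \<Rightarrow> nat"
    and eps p :: real
  defines "Q \<equiv> length qs"
  defines "S \<equiv> (\<Sum>k=1..K. card (Om k))"
  defines "NS \<equiv> {i. i < Q \<and> \<not> (\<exists>k\<in>{1..K}. qs ! i \<in> sigma_sets X (Om k))}"
  defines "eps' \<equiv> (1 - p) * real Q * eps / real S"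
  assumes DX: "set_mset D \<subseteq> X"
    and K: "K \<ge> 1"
    and part_fin: "\<And>k. k \<in> {1..K} \<Longrightarrow> finite (Om k)"
    and part_ne: "\<And>k w. k \<in> {1..K} \<Longrightarrow> w \<in> Om k \<Longrightarrow> w \<noteq> {}"
    and part_disj: "\<And>k w w'. k \<in> {1..K} \<Longrightarrow> w \<in> Om k \<Longrightarrow> w' \<in> Om k \<Longrightarrow> w \<noteq> w' \<Longrightarrow> w \<inter> w' = {}"
    and part_cover: "\<And>k. k \<in> {1..K} \<Longrightarrow> \<Union>(Om k) = X"
    and p_def: "p = real (card NS) / real Q"
    and p_lt: "p < 1"
    and kq: "\<And>i. i < Q \<Longrightarrow> i \<notin> NS \<Longrightarrow>
               kq i \<in> {1..K} \<and> qs ! i \<in> sigma_sets X (Om (kq i)) \<and> qs ! i \<noteq> {}"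
    and eps: "eps > 0"
    and Qbig: "real Q > real S * sqrt (real (Max ((\<lambda>k. card (Om k)) ` {1..K}))) / (1 - p)"
  shows "(1 / real Q) * (\<Sum>i<Q. 2 / (if i \<in> NS then bench_var D eps (qs ! i)
                                     else sigma_var D eps' (Om (kq i)) (qs ! i)))
         > (1 / real Q) * (\<Sum>i<Q. 2 / bench_var D eps (qs ! i))"
proof -
  have Q_pos: "Q > 0"
    using Qbig p_def by (cases "Q = 0") (auto simp: mult_less_0_iff)
  have partition: "partition_on X (Om k)" if "k \<in> {1..K}" for k
    using part_cover[OF that] part_disj[OF that] part_ne[OF that]
    by (auto simp: partition_on_def disjoint_def)
  have "card NS < card {..<Q}"
    using p_lt Q_pos by (simp add: p_def divide_less_eq)
  then have "NS \<noteq> {..<Q}"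
    by auto
  then obtain i0 where i0: "i0 < Q" "i0 \<notin> NS"
    by (auto simp: NS_def)
  have "blocks_of (Om (kq i0)) (qs ! i0) \<noteq> {}"
    using kq[OF i0] partition by (intro blocks_of_nonempty) auto
  then have "0 < card (Om (kq i0))"
    using kq[OF i0] part_fin by (auto simp: blocks_of_def card_gt_0_iff)
  also have "card (Om (kq i0)) \<le> S"
    unfolding S_def using kq[OF i0] by (intro member_le_sum) auto
  finally have S_pos: "real S > 0"
    by simp
  have gain: "2 / bench_var D eps (qs ! i) < 2 / sigma_var D eps' (Om (kq i)) (qs ! i)"
    if "i < Q" "i \<notin> NS" for i
  proof (rule bench_utility_lt_sigma_utility)
    show "real (card (Om (kq i))) * eps^2 < eps'^2"
      unfolding eps'_def using kq[OF that] S_pos p_lt eps Qbig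
      by (intro sq_lt_of_sqrt_bound) (auto intro!: Max_ge)
  qed (use kq[OF that] partition part_fin eps S_pos p_lt Q_pos in \<open>auto simp: eps'_def\<close>)
  have "(\<Sum>i<Q. 2 / bench_var D eps (qs ! i))
      < (\<Sum>i<Q. 2 / (if i \<in> NS then bench_var D eps (qs ! i) else sigma_var D eps' (Om (kq i)) (qs ! i)))"
    by (rule sum_strict_mono_ex1) (use gain i0 in \<open>auto intro: less_imp_le\<close>)
  then show ?thesis
    using Q_pos by (intro mult_strict_left_mono) auto
qed

end
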